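(* Let $\mathcal{C}$ be a permutation class (resp. polyomino class). If the $p$-basis of $\mathcal{C}$ is also a minimal $m$-basis of $\mathcal{C}$, then it is the unique minimal $m$-basis of $\mathcal{C}$.
   Context: Binary matrices have entries in $\{0,1\}$; $M'\preccurlyeq M$ (submatrix order) means $M'$ is obtained from $M$ by deleting some rows and/or columns. A permutation $\sigma$ of $\{1,\dots,n\}$ is identified with its permutation matrix ($M_\sigma(i,j)=1$ iff $i=\sigma(j)$); a permutation class is a set of permutations closed under taking submatrices that are permutation matrices (i.e. under taking patterns). A polyomino is a finite edge-connected union of unit cells of $\mathbb{Z}^2$ up to translation, identified with the binary matrix of its minimal bounding rectangle ($1$ for cells, $0$ otherwise); a polyomino class is a set of polyominoes closed under taking submatrices that are polyominoes. $Av(\mathcal{M})$ denotes the set of permutations (resp. polyominoes) with no submatrix in $\mathcal{M}$. The $p$-basis of a class $\mathcal{C}$ is the set of permutations (resp. polyominoes) not in $\mathcal{C}$ that are minimal for the submatrix order among permutations (resp. polyominoes) not in $\mathcal{C}$; it is the unique antichain $\mathcal{B}$ of permutations (resp. polyominoes) with $\mathcal{C}=Av(\mathcal{B})$. An $m$-basis of $\mathcal{C}$ is an antichain $\mathcal{M}$ of binary matrices (for $\preccurlyeq$) with $\mathcal{C}=Av(\mathcal{M})$. A minimal $m$-basis of $\mathcal{C}$ is an $m$-basis $\mathcal{M}$ such that (1) no strict subset $\mathcal{M}'\subsetneq\mathcal{M}$ satisfies $\mathcal{C}=Av(\mathcal{M}')$, and (2) for every $M\in\mathcal{M}$ and every submatrix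 $M'\preccurlyeq M$, either $M'=M$ or $\mathcal{C}\neq Av\big((\mathcal{M}\setminus\{M\})\cup\{M'\}\big)$. *)

theory Defs
  imports Main
begin

text \<open>A binary matrix with m rows and n columns is represented as a triple (m, n, f),
  where f i j is the entry in row i, column j (0-based); entries outside the
  m x n range are required to be False (normal form), so equality of triples is
  equality of matrices.\<close>

type_synonym bmat = "nat \<times> nat \<times> (nat \<Rightarrow> nat \<Rightarrow> bool)"

definition valid_mat :: "bmat \<Rightarrow> bool" where
  "valid_mat M \<longleftrightarrow> (case M of (m, n, f) \<Rightarrow> (\<forall>i j. f i j \<longrightarrow> i < m \<and> j < n))"

definition submat :: "bmat \<Rightarrow> bmat \<Rightarrow> bool" (infix "\<preceq>\<^sub>m" 50) where
  "submat M' M \<longleftrightarrow> valid_mat M' \<and> valid_mat M \<and>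
     (case M' of (m', n', f') \<Rightarrow> case M of (m, n, f) \<Rightarrow>
       (\<exists>r c. strict_mono_on {..<m'} r \<and> r ` {..<m'} \<subseteq> {..<m} \<and>
              strict_mono_on {..<n'} c \<and> c ` {..<n'} \<subseteq> {..<n} \<and>
              (\<forall>i<m'. \<forall>j<n'. f' i j = f (r i) (c j))))"

text \<open>Permutation matrices (including the empty permutation of size 0).\<close>

definition perm_mats :: "bmat set" where
  "perm_mats = {(m, n, f) | m n f. valid_mat (m, n, f) \<and> m = n \<and>
      (\<forall>j<n. \<exists>!i. i < m \<and> f i j) \<and> (\<forall>i<m. \<exists>!j. j < n \<and> f i j)}"

text \<open>Polyominoes: nonempty edge-connected cell sets, identified with the binary
  matrix of their minimal bounding rectangle (so every row and column has a 1).\<close>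

definition cell_adj :: "nat \<times> nat \<Rightarrow> nat \<times> nat \<Rightarrow> bool" where
  "cell_adj a b \<longleftrightarrow> (case a of (i, j) \<Rightarrow> case b of (i', j') \<Rightarrow>
      (i = i' \<and> (j' = j + 1 \<or> j = j' + 1)) \<or> (j = j' \<and> (i' = i + 1 \<or> i = i' + 1)))"

definition polyomino_mats :: "bmat set" where
  "polyomino_mats = {(m, n, f) | m n f. valid_mat (m, n, f) \<and> 0 < m \<and> 0 < n \<and>
      (\<forall>i<m. \<exists>j<n. f i j) \<and> (\<forall>j<n. \<exists>i<m. f i j) \<and>
      (\<forall>a b. f (fst a) (snd a) \<longrightarrow> f (fst b) (snd b) \<longrightarrow>
         (\<lambda>x y. f (fst x) (snd x) \<and> f (fst y) (snd y) \<and> cell_adj x y)\<^sup>*\<^sup>* a b)}"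

text \<open>Obj is the universe of objects (permutations or polyominoes).\<close>

definition is_class :: "bmat set \<Rightarrow> bmat set \<Rightarrow> bool" where
  "is_class Obj C \<longleftrightarrow> C \<subseteq> Obj \<and> (\<forall>M\<in>C. \<forall>M'\<in>Obj. M' \<preceq>\<^sub>m M \<longrightarrow> M' \<in> C)"

definition Av :: "bmat set \<Rightarrow> bmat set \<Rightarrow> bmat set" where
  "Av Obj Ms = {P \<in> Obj. \<forall>M\<in>Ms. \<not> M \<preceq>\<^sub>m P}"

definition p_basis :: "bmat set \<Rightarrow> bmat set \<Rightarrow> bmat set" where
  "p_basis Obj C = {P \<in> Obj. P \<notin> C \<and> (\<forall>Q\<in>Obj. Q \<preceq>\<^sub>m P \<and> Q \<notin> C \<longrightarrow> Q = P)}"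

definition mat_antichain :: "bmat set \<Rightarrow> bool" where
  "mat_antichain Ms \<longleftrightarrow> (\<forall>M\<in>Ms. valid_mat M) \<and>
      (\<forall>A\<in>Ms. \<forall>B\<in>Ms. A \<preceq>\<^sub>m B \<longrightarrow> A = B)"

definition m_basis :: "bmat set \<Rightarrow> bmat set \<Rightarrow> bmat set \<Rightarrow> bool" where
  "m_basis Obj C Ms \<longleftrightarrow> mat_antichain Ms \<and> C = Av Obj Ms"

definition minimal_m_basis :: "bmat set \<Rightarrow> bmat set \<Rightarrow> bmat set \<Rightarrow> bool" where
  "minimal_m_basis Obj C Ms \<longleftrightarrow> m_basis Obj C Ms \<and>
     (\<forall>Ms'. Ms' \<subset> Ms \<longrightarrow> C \<noteq> Av Obj Ms') \<and>
     (\<forall>M\<in>Ms. \<forall>M'. M' \<preceq>\<^sub>m M \<longrightarrow> M' = M \<or> C \<noteq> Av Obj ((Ms - {M}) \<union> {M'}))"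

end

theory Submission
  imports Defs
begin

text \<open>Every element M of a minimal m-basis Ms is witnessed by an object P outside the class that
  contains M but no other element of Ms as a submatrix. Below P lies a p-basis element Q, and since
  Q is outside the class it contains some element of Ms, necessarily M. Replacing Q by its submatrix
  M in the p-basis does not change the class, so minimality of the p-basis forces M = Q. Hence Ms is
  contained in the p-basis, and minimality of the p-basis under inclusion gives equality.
  Neither the kind of objects nor the closure of the class matters: the argument only uses that the
  submatrix order is a partial order without infinite descending chains.\<close>

lemma submat_refl: "valid_mat M \<Longrightarrow> M \<preceq>\<^sub>m M"
  unfolding submat_def by (cases M) (auto intro!: exI[of _ id] simp: strict_mono_on_def)

lemma submat_valid: "A \<preceq>\<^sub>m B \<Longrightarrow> valid_mat A \<and> valid_mat B"
  unfolding submat_def by blast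

lemma submat_trans:
  assumes "A \<preceq>\<^sub>m B" "B \<preceq>\<^sub>m D"
  shows "A \<preceq>\<^sub>m D"
proof -
  obtain ma na fa mb nb fb md nd fd where eqs: "A = (ma, na, fa)" "B = (mb, nb, fb)" "D = (md, nd, fd)"
    by (metis prod.exhaust)
  from assms(1) obtain r c where
    r: "strict_mono_on {..<ma} r" "r ` {..<ma} \<subseteq> {..<mb}" and
    c: "strict_mono_on {..<na} c" "c ` {..<na} \<subseteq> {..<nb}" and
    fa: "\<forall>i<ma. \<forall>j<na. fa i j = fb (r i) (c j)"
    unfolding submat_def eqs by auto
  from assms(2) obtain r' c' where
    r': "strict_mono_on {..<mb} r'" "r' ` {..<mb} \<subseteq> {..<md}" and
    c': "strict_mono_on {..<nb} c'" "c' ` {..<nb} \<subseteq> {..<nd}" and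
    fb: "\<forall>i<mb. \<forall>j<nb. fb i j = fd (r' i) (c' j)"
    unfolding submat_def eqs by auto
  have "strict_mono_on {..<ma} (r' \<circ> r)" "(r' \<circ> r) ` {..<ma} \<subseteq> {..<md}"
    using r r' unfolding strict_mono_on_def by (auto simp: image_subset_iff)
  moreover have "strict_mono_on {..<na} (c' \<circ> c)" "(c' \<circ> c) ` {..<na} \<subseteq> {..<nd}"
    using c c' unfolding strict_mono_on_def by (auto simp: image_subset_iff)
  moreover have "\<forall>i<ma. \<forall>j<na. fa i j = fd ((r' \<circ> r) i) ((c' \<circ> c) j)"
    using r(2) c(2) fa fb by (auto simp: image_subset_iff)
  moreover have "valid_mat A" "valid_mat D" using assms submat_valid by blast+
  ultimately show ?thesis
    unfolding submat_def eqs prod.case by blast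
qed

lemma strict_mono_on_lessThan_add_le:
  fixes r :: "nat \<Rightarrow> nat"
  assumes "strict_mono_on {..<m} r" "i \<le> j" "j < m"
  shows "r i + (j - i) \<le> r j"
  using assms(2,3)
proof (induction j)
  case (Suc j)
  show ?case
  proof (cases "i = Suc j")
    case False
    then have "r i + (j - i) \<le> r j" using Suc by simp
    moreover have "r j < r (Suc j)" using strict_mono_onD[OF assms(1)] Suc.prems by simp
    ultimately show ?thesis using False Suc.prems by linarith
  qed simp
qed simp

lemma strict_mono_on_lessThan_self_map_id:
  fixes r :: "nat \<Rightarrow> nat"
  assumes "strict_mono_on {..<m} r" "r ` {..<m} \<subseteq> {..<m}" "i < m"
  shows "r i = i"
proof -
  have "r 0 + i \<le> r i" using strict_mono_on_lessThan_add_le[OF assms(1), of 0 i] assms(3) by simp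
  moreover have "r i + (m - 1 - i) \<le> r (m - 1)"
    using strict_mono_on_lessThan_add_le[OF assms(1), of i "m - 1"] assms(3) by simp
  moreover have "r (m - 1) < m" using assms(2,3) by (auto simp: image_subset_iff)
  ultimately show ?thesis using assms(3) by linarith
qed

lemma card_le_of_strict_mono_on:
  fixes r :: "nat \<Rightarrow> nat"
  assumes "strict_mono_on {..<k} r" "r ` {..<k} \<subseteq> {..<m}"
  shows "k \<le> m"
  using card_inj_on_le[OF strict_mono_on_imp_inj_on[OF assms(1)] assms(2)] by simp

lemma submat_dims_le:
  assumes "(m', n', f') \<preceq>\<^sub>m (m, n, f)"
  shows "m' \<le> m" "n' \<le> n"
  using assms card_le_of_strict_mono_on unfolding submat_def by auto

lemma submat_same_dims_eq:
  assumes "(m, n, f') \<preceq>\<^sub>m (m, n, f)"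
  shows "f' = f"
proof (intro ext)
  fix i j
  from assms obtain r c where
    r: "strict_mono_on {..<m} r" "r ` {..<m} \<subseteq> {..<m}" and
    c: "strict_mono_on {..<n} c" "c ` {..<n} \<subseteq> {..<n}" and
    f: "\<forall>i<m. \<forall>j<n. f' i j = f (r i) (c j)" and
    valid: "valid_mat (m, n, f')" "valid_mat (m, n, f)"
    unfolding submat_def by auto
  show "f' i j = f i j"
  proof (cases "i < m \<and> j < n")
    case True
    then show ?thesis
      using f strict_mono_on_lessThan_self_map_id[OF r] strict_mono_on_lessThan_self_map_id[OF c]
      by simp
  next
    case False
    then show ?thesis using valid unfolding valid_mat_def by auto
  qed
qed

lemma p_basis_below:
  assumes "P \<in> Obj" "P \<notin> C" "valid_mat P"
  shows "\<exists>Q\<in>p_basis Obj C. Q \<preceq>\<^sub>m P"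
proof -
  let ?S = "\<lambda>Q. Q \<in> Obj \<and> Q \<preceq>\<^sub>m P \<and> Q \<notin> C"
  let ?size = "\<lambda>Q :: bmat. fst Q + fst (snd Q)"
  obtain Q where Q: "?S Q" and least: "\<And>Q'. ?S Q' \<Longrightarrow> ?size Q \<le> ?size Q'"
    using ex_has_least_nat[of ?S P ?size] assms submat_refl by blast
  have "Q \<in> p_basis Obj C"
    unfolding p_basis_def
  proof (intro CollectI conjI ballI impI)
    show "Q \<in> Obj" "Q \<notin> C" using Q by auto
    fix Q' assume Q': "Q' \<in> Obj" "Q' \<preceq>\<^sub>m Q \<and> Q' \<notin> C"
    then have S': "?S Q'" using Q submat_trans by blast
    obtain m n f m' n' f' where eqs: "Q = (m, n, f)" "Q' = (m', n', f')"
      by (metis prod.exhaust)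
    with Q' have sub: "(m', n', f') \<preceq>\<^sub>m (m, n, f)" by simp
    then have "m' = m" "n' = n"
      using least[OF S'] submat_dims_le[OF sub] eqs by auto
    then show "Q' = Q" using submat_same_dims_eq sub eqs by simp
  qed
  then show ?thesis using Q by blast
qed

lemma Av_antimono: "Ms \<subseteq> Ms' \<Longrightarrow> Av Obj Ms' \<subseteq> Av Obj Ms"
  unfolding Av_def by auto

lemma minimal_m_basis_Av: "minimal_m_basis Obj C Ms \<Longrightarrow> C = Av Obj Ms"
  unfolding minimal_m_basis_def m_basis_def by (elim conjE)

lemma minimal_m_basis_psubset: "minimal_m_basis Obj C Ms \<Longrightarrow> Ms' \<subset> Ms \<Longrightarrow> C \<noteq> Av Obj Ms'"
  unfolding minimal_m_basis_def by (elim conjE allE impE)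

lemma minimal_m_basis_replace:
  assumes "minimal_m_basis Obj C Ms" "M \<in> Ms" "M' \<preceq>\<^sub>m M" "C = Av Obj ((Ms - {M}) \<union> {M'})"
  shows "M' = M"
proof -
  have "\<forall>M\<in>Ms. \<forall>M'. M' \<preceq>\<^sub>m M \<longrightarrow> M' = M \<or> C \<noteq> Av Obj ((Ms - {M}) \<union> {M'})"
    using assms(1) unfolding minimal_m_basis_def by (elim conjE)
  with assms(2-4) show ?thesis by blast
qed

lemma minimal_m_basis_witness:
  assumes "minimal_m_basis Obj C Ms" "M \<in> Ms"
  obtains P where "P \<in> Obj" "P \<notin> C" "\<And>M'. M' \<in> Ms \<Longrightarrow> M' \<preceq>\<^sub>m P \<Longrightarrow> M' = M"
proof -
  have "Ms - {M} \<subset> Ms" using assms(2) by blast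
  then have "C \<noteq> Av Obj (Ms - {M})" using minimal_m_basis_psubset[OF assms(1)] by blast
  moreover have "C \<subseteq> Av Obj (Ms - {M})"
    using minimal_m_basis_Av[OF assms(1)] Av_antimono[of "Ms - {M}" Ms Obj] by blast
  ultimately obtain P where "P \<in> Av Obj (Ms - {M})" "P \<notin> C" by blast
  with that show ?thesis unfolding Av_def by blast
qed

lemma minimal_m_basis_below_p_basis:
  assumes "minimal_m_basis Obj C Ms" "M \<in> Ms"
  obtains Q where "Q \<in> p_basis Obj C" "M \<preceq>\<^sub>m Q"
proof -
  obtain P where P: "P \<in> Obj" "P \<notin> C" "\<And>M'. M' \<in> Ms \<Longrightarrow> M' \<preceq>\<^sub>m P \<Longrightarrow> M' = M"
    using minimal_m_basis_witness[OF assms] by blast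
  have C: "C = Av Obj Ms" using minimal_m_basis_Av[OF assms(1)] .
  with P(1,2) have "valid_mat P" unfolding Av_def using submat_valid by blast
  with P(1,2) obtain Q where Q: "Q \<in> p_basis Obj C" "Q \<preceq>\<^sub>m P"
    using p_basis_below by blast
  moreover have "Q \<in> Obj" "Q \<notin> C" using Q(1) unfolding p_basis_def by auto
  ultimately obtain M' where "M' \<in> Ms" "M' \<preceq>\<^sub>m Q" using C unfolding Av_def by auto
  with P(3) Q(2) submat_trans have "M \<preceq>\<^sub>m Q" by metis
  with Q(1) that show ?thesis by blast
qed

lemma Av_replace_by_submat:
  assumes "C = Av Obj Ms" "C \<subseteq> Av Obj {M}" "Q \<in> Ms" "M \<preceq>\<^sub>m Q"
  shows "C = Av Obj ((Ms - {Q}) \<union> {M})"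
proof
  show "C \<subseteq> Av Obj ((Ms - {Q}) \<union> {M})" using assms(1,2) unfolding Av_def by auto
  show "Av Obj ((Ms - {Q}) \<union> {M}) \<subseteq> C"
    using assms(1,3,4) submat_trans unfolding Av_def by blast
qed

lemma minimal_m_basis_subset_p_basis:
  assumes B: "minimal_m_basis Obj C (p_basis Obj C)" and Ms: "minimal_m_basis Obj C Ms"
  shows "Ms \<subseteq> p_basis Obj C"
proof
  fix M assume M: "M \<in> Ms"
  obtain Q where Q: "Q \<in> p_basis Obj C" "M \<preceq>\<^sub>m Q"
    using minimal_m_basis_below_p_basis[OF Ms M] by blast
  have "C \<subseteq> Av Obj {M}"
    using minimal_m_basis_Av[OF Ms] Av_antimono[of "{M}" Ms Obj] M by blast
  then have "C = Av Obj ((p_basis Obj C - {Q}) \<union> {M})"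
    using Av_replace_by_submat[OF minimal_m_basis_Av[OF B] _ Q] by blast
  then have "M = Q" using minimal_m_basis_replace[OF B Q] by blast
  with Q show "M \<in> p_basis Obj C" by simp
qed

theorem proposition6:
  assumes "Obj = perm_mats \<or> Obj = polyomino_mats"
    and "is_class Obj C"
    and "minimal_m_basis Obj C (p_basis Obj C)"
  shows "\<forall>Ms. minimal_m_basis Obj C Ms \<longrightarrow> Ms = p_basis Obj C"
proof (intro allI impI)
  fix Ms assume Ms: "minimal_m_basis Obj C Ms"
  have "Ms \<subseteq> p_basis Obj C" using minimal_m_basis_subset_p_basis[OF assms(3) Ms] .
  moreover have "C = Av Obj Ms" using minimal_m_basis_Av[OF Ms] .
  ultimately show "Ms = p_basis Obj C"
    using minimal_m_basis_psubset[OF assms(3)] by blast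
qed

end
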